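(* Let $A,B\subset\{0,1\}^n$ be increasing events, let $\omega,\xi$ be independent uniform random elements of $\{0,1\}^n$. Then $$\mathrm P[A\circ B]\le\mathbb P[(A,B)\text{ occurs disjointly on }(\omega,\xi)]\le\mathrm P[A]\,\mathrm P[B].$$
   Context: $\mathrm P$ is the uniform measure on $\{0,1\}^n$. $(x,I)$ is a witness for $A$ if $\{y: y|_I=x|_I\}\subset A$; $(A,B)$ occurs disjointly on $(x,y)$ if there are disjoint $I,J\subset[n]$ with $(x,I)$ a witness for $A$ and $(y,J)$ a witness for $B$; $A\circ B=\{x:(A,B)\text{ occurs disjointly on }(x,x)\}$. An event is increasing if its indicator is increasing for the coordinatewise order. *)

theory Defs
  imports Complex_Main
begin

text \<open>The hypercube {0,1}^n: elements are boolean functions on nat that vanish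
  (are False) outside {..<n}; True encodes 1.\<close>
definition cube :: "nat \<Rightarrow> (nat \<Rightarrow> bool) set" where
  "cube n = {x. \<forall>i. n \<le> i \<longrightarrow> \<not> x i}"

definition P :: "nat \<Rightarrow> (nat \<Rightarrow> bool) set \<Rightarrow> real" where
  "P n A = real (card (A \<inter> cube n)) / 2 ^ n"

definition P2 :: "nat \<Rightarrow> ((nat \<Rightarrow> bool) \<times> (nat \<Rightarrow> bool)) set \<Rightarrow> real" where
  "P2 n E = real (card (E \<inter> (cube n \<times> cube n))) / (2 ^ n * 2 ^ n)"

definition increasing :: "nat \<Rightarrow> (nat \<Rightarrow> bool) set \<Rightarrow> bool" where
  "increasing n A \<longleftrightarrow> A \<subseteq> cube n \<and>
     (\<forall>x\<in>A. \<forall>y\<in>cube n. (\<forall>i<n. x i \<longrightarrow> y i) \<longrightarrow> y \<in> A)"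

definition witness :: "nat \<Rightarrow> (nat \<Rightarrow> bool) set \<Rightarrow> (nat \<Rightarrow> bool) \<Rightarrow> nat set \<Rightarrow> bool" where
  "witness n A x I \<longleftrightarrow> I \<subseteq> {..<n} \<and> {y\<in>cube n. \<forall>i\<in>I. y i = x i} \<subseteq> A"

definition occurs_disjointly ::
  "nat \<Rightarrow> (nat \<Rightarrow> bool) set \<Rightarrow> (nat \<Rightarrow> bool) set \<Rightarrow> (nat \<Rightarrow> bool) \<Rightarrow> (nat \<Rightarrow> bool) \<Rightarrow> bool" where
  "occurs_disjointly n A B x y \<longleftrightarrow>
     (\<exists>I J. I \<subseteq> {..<n} \<and> J \<subseteq> {..<n} \<and> I \<inter> J = {} \<and> witness n A x I \<and> witness n B y J)"

definition box :: "nat \<Rightarrow> (nat \<Rightarrow> bool) set \<Rightarrow> (nat \<Rightarrow> bool) set \<Rightarrow> (nat \<Rightarrow> bool) set" where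
  "box n A B = {x\<in>cube n. occurs_disjointly n A B x x}"

end

theory Submission
  imports Defs
begin

text \<open>Interpolate between \<open>(\<omega>, \<omega>)\<close> and \<open>(\<omega>, \<xi>)\<close>: the second configuration takes its first
  \<open>k\<close> coordinates from \<open>\<xi>\<close> and the others from \<open>\<omega>\<close>. Raising \<open>k\<close> by one never decreases the
  number of pairs \<open>(\<omega>, \<xi>)\<close> on which \<open>(A, B)\<close> occurs disjointly: a pair that loses the
  occurrence must have \<open>\<omega> k = 1\<close>, \<open>\<xi> k = 0\<close> with \<open>k\<close> used by the witness of \<open>B\<close>, and swapping
  the \<open>k\<close>-th coordinates of \<open>\<omega>\<close> and \<open>\<xi>\<close> injects such pairs into those that gain it. At
  \<open>k = 0\<close> the count is \<open>|A \<circ> B| 2^n\<close>, at \<open>k = n\<close> it is the number of disjoint occurrences on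
  independent pairs; the upper bound holds since such an occurrence forces \<open>\<omega> \<in> A\<close>, \<open>\<xi> \<in> B\<close>.\<close>

lemma cube_eq_image_Pow: "cube n = (\<lambda>S i. i \<in> S) ` Pow {..<n}"
proof
  show "cube n \<subseteq> (\<lambda>S i. i \<in> S) ` Pow {..<n}"
  proof
    fix x assume "x \<in> cube n"
    then have "x = (\<lambda>i. i \<in> {i. i < n \<and> x i})"
      by (auto simp: cube_def not_less[symmetric])
    then show "x \<in> (\<lambda>S i. i \<in> S) ` Pow {..<n}" by blast
  qed
qed (auto simp: cube_def)

lemma finite_cube: "finite (cube n)"
  unfolding cube_eq_image_Pow by simp

lemma card_cube: "card (cube n) = 2 ^ n"
proof -
  have "inj_on (\<lambda>S i. i \<in> S) (Pow {..<n})"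
    by (auto simp: inj_on_def fun_eq_iff)
  then show ?thesis
    unfolding cube_eq_image_Pow by (simp add: card_image card_Pow)
qed

lemma P_cube: "P n (cube n) = 1"
  by (simp add: P_def card_cube)

lemma P2_Times: "P2 n (S \<times> T) = P n S * P n T"
proof -
  have "S \<times> T \<inter> cube n \<times> cube n = (S \<inter> cube n) \<times> (T \<inter> cube n)" by auto
  then show ?thesis
    by (simp add: P2_def P_def card_cartesian_product)
qed

lemma P2_mono_card:
  assumes "card (E \<inter> cube n \<times> cube n) \<le> card (F \<inter> cube n \<times> cube n)"
  shows "P2 n E \<le> P2 n F"
  using assms unfolding P2_def by (simp add: divide_right_mono)

lemma P2_mono:
  assumes "E \<inter> cube n \<times> cube n \<subseteq> F"
  shows "P2 n E \<le> P2 n F"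
proof (rule P2_mono_card)
  have "E \<inter> cube n \<times> cube n \<subseteq> F \<inter> cube n \<times> cube n" using assms by blast
  then show "card (E \<inter> cube n \<times> cube n) \<le> card (F \<inter> cube n \<times> cube n)"
    by (intro card_mono) (simp_all add: finite_cube)
qed

lemma witness_cong:
  assumes "witness n A x I" "\<forall>i\<in>I. y i = x i"
  shows "witness n A y I"
  using assms unfolding witness_def by auto

lemma witness_remove_zero_coord:
  assumes inc: "increasing n A" and wit: "witness n A x I" and "\<not> x k"
  shows "witness n A x (I - {k})"
proof -
  have "y \<in> A" if y: "y \<in> cube n" "\<forall>i\<in>I - {k}. y i = x i" for y
  proof (cases "k < n")
    case True
    have "y(k := False) \<in> cube n" using y(1) by (auto simp: cube_def)
    moreover have "\<forall>i\<in>I. (y(k := False)) i = x i" using y(2) \<open>\<not> x k\<close> by auto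
    ultimately have "y(k := False) \<in> A" using wit by (auto simp: witness_def)
    then show ?thesis using inc y(1) unfolding increasing_def by auto
  next
    case False
    then have "k \<notin> I" using wit by (auto simp: witness_def)
    then show ?thesis using wit y by (auto simp: witness_def)
  qed
  then show ?thesis using wit by (auto simp: witness_def)
qed

definition hybrid :: "nat \<Rightarrow> (nat \<Rightarrow> bool) \<Rightarrow> (nat \<Rightarrow> bool) \<Rightarrow> nat \<Rightarrow> bool" where
  "hybrid k w z = (\<lambda>i. if i < k then z i else w i)"

definition hybrid_occurrences ::
  "nat \<Rightarrow> (nat \<Rightarrow> bool) set \<Rightarrow> (nat \<Rightarrow> bool) set \<Rightarrow> nat
    \<Rightarrow> ((nat \<Rightarrow> bool) \<times> (nat \<Rightarrow> bool)) set" where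
  "hybrid_occurrences n A B k =
     {(w, z) \<in> cube n \<times> cube n. occurs_disjointly n A B w (hybrid k w z)}"

lemma hybrid_occurrences_0:
  "hybrid_occurrences n A B 0 = (box n A B \<inter> cube n) \<times> cube n"
  by (auto simp: hybrid_occurrences_def hybrid_def box_def)

lemma hybrid_occurrences_dim:
  "hybrid_occurrences n A B n = {(\<omega>, \<xi>). occurs_disjointly n A B \<omega> \<xi>} \<inter> cube n \<times> cube n"
proof -
  have "hybrid n w z = z" if "w \<in> cube n" "z \<in> cube n" for w z
    using that by (auto simp: hybrid_def cube_def fun_eq_iff)
  then show ?thesis by (auto simp: hybrid_occurrences_def)
qed

lemma occurs_disjointly_hybrid_Suc_if_zero:
  assumes incA: "increasing n A" and incB: "increasing n B"
    and occ: "occurs_disjointly n A B w (hybrid k w z)" and "\<not> w k"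
    and "\<forall>i. i \<noteq> k \<longrightarrow> w' i = w i" and "\<forall>i. i \<noteq> k \<longrightarrow> z' i = z i"
  shows "occurs_disjointly n A B w' (hybrid (Suc k) w' z')"
proof -
  obtain I J where IJ: "I \<subseteq> {..<n}" "J \<subseteq> {..<n}" "I \<inter> J = {}"
    "witness n A w I" "witness n B (hybrid k w z) J"
    using occ unfolding occurs_disjointly_def by blast
  have "witness n A w (I - {k})"
    using witness_remove_zero_coord[OF incA IJ(4)] \<open>\<not> w k\<close> .
  then have "witness n A w' (I - {k})"
    by (rule witness_cong) (use assms in auto)
  moreover have "witness n B (hybrid k w z) (J - {k})"
    using witness_remove_zero_coord[OF incB IJ(5)] \<open>\<not> w k\<close> by (simp add: hybrid_def)
  then have "witness n B (hybrid (Suc k) w' z') (J - {k})"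
    by (rule witness_cong) (use assms in \<open>auto simp: hybrid_def\<close>)
  ultimately show ?thesis
    using IJ unfolding occurs_disjointly_def by (meson Diff_subset disjoint_iff DiffD1 order_trans)
qed

lemma occurs_disjointly_hybrid_lost:
  assumes incA: "increasing n A" and incB: "increasing n B"
    and occ: "occurs_disjointly n A B w (hybrid k w z)"
    and lost: "\<not> occurs_disjointly n A B w (hybrid (Suc k) w z)"
  shows "w k" and "\<not> z k"
    and "occurs_disjointly n A B (w(k := False)) (hybrid (Suc k) (w(k := False)) (z(k := True)))"
proof -
  show wk: "w k"
    using occurs_disjointly_hybrid_Suc_if_zero[OF incA incB occ, of w z] lost by auto
  obtain I J where IJ: "I \<subseteq> {..<n}" "J \<subseteq> {..<n}" "I \<inter> J = {}"
    "witness n A w I" "witness n B (hybrid k w z) J"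
    using occ unfolding occurs_disjointly_def by blast
  have keep_B: False if "witness n B (hybrid (Suc k) w z) J"
    using that lost IJ unfolding occurs_disjointly_def by blast
  show zk: "\<not> z k"
    using keep_B witness_cong[OF IJ(5), of "hybrid (Suc k) w z"] wk
    by (auto simp: hybrid_def less_Suc_eq)
  have "k \<in> J"
  proof (rule ccontr)
    assume "k \<notin> J"
    then have "\<forall>i\<in>J. hybrid (Suc k) w z i = hybrid k w z i"
      by (auto simp: hybrid_def less_Suc_eq)
    then show False using keep_B witness_cong[OF IJ(5)] by blast
  qed
  then have "\<forall>i\<in>I. (w(k := False)) i = w i" using IJ(3) by auto
  then have "witness n A (w(k := False)) I" by (rule witness_cong[OF IJ(4)])
  moreover have "witness n B (hybrid (Suc k) (w(k := False)) (z(k := True))) J"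
    using witness_cong[OF IJ(5)] wk by (auto simp: hybrid_def less_Suc_eq)
  ultimately show "occurs_disjointly n A B (w(k := False)) (hybrid (Suc k) (w(k := False)) (z(k := True)))"
    using IJ unfolding occurs_disjointly_def by blast
qed

definition swap_coord ::
  "nat \<Rightarrow> (nat \<Rightarrow> bool) \<times> (nat \<Rightarrow> bool) \<Rightarrow> (nat \<Rightarrow> bool) \<times> (nat \<Rightarrow> bool)" where
  "swap_coord k = (\<lambda>(w, z). (w(k := z k), z(k := w k)))"

lemma swap_coord_swap_coord [simp]: "swap_coord k (swap_coord k p) = p"
  by (cases p) (auto simp: swap_coord_def)

lemma swap_coord_lost_in_gained:
  assumes "increasing n A" "increasing n B"
  shows "swap_coord k ` (hybrid_occurrences n A B k - hybrid_occurrences n A B (Suc k))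
    \<subseteq> hybrid_occurrences n A B (Suc k) - hybrid_occurrences n A B k"
proof (rule image_subsetI)
  fix p assume p: "p \<in> hybrid_occurrences n A B k - hybrid_occurrences n A B (Suc k)"
  obtain w z where wz: "p = (w, z)" by fastforce
  from p have cube: "w \<in> cube n" "z \<in> cube n"
    and occ: "occurs_disjointly n A B w (hybrid k w z)"
    and lost: "\<not> occurs_disjointly n A B w (hybrid (Suc k) w z)"
    by (auto simp: hybrid_occurrences_def wz)
  note swapped = occurs_disjointly_hybrid_lost[OF assms occ lost]
  have img: "swap_coord k (w, z) = (w(k := False), z(k := True))"
    using swapped(1,2) by (simp add: swap_coord_def)
  have "w(k := False) \<in> cube n" "z(k := True) \<in> cube n"
    using cube swapped(1) by (auto simp: cube_def)
  moreover have "\<not> occurs_disjointly n A B (w(k := False)) (hybrid k (w(k := False)) (z(k := True)))"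
    using occurs_disjointly_hybrid_Suc_if_zero[OF assms, of "w(k := False)" k "z(k := True)" w z] lost
    by auto
  ultimately show "swap_coord k p \<in> hybrid_occurrences n A B (Suc k) - hybrid_occurrences n A B k"
    using swapped(3) unfolding wz img by (auto simp: hybrid_occurrences_def)
qed

lemma card_hybrid_occurrences_Suc:
  assumes "increasing n A" "increasing n B"
  shows "card (hybrid_occurrences n A B k) \<le> card (hybrid_occurrences n A B (Suc k))"
proof -
  define S where "S = hybrid_occurrences n A B k"
  define T where "T = hybrid_occurrences n A B (Suc k)"
  have "finite (cube n \<times> cube n)" by (simp add: finite_cube)
  then have fin: "finite S" "finite T"
    unfolding S_def T_def hybrid_occurrences_def by (auto elim: rev_finite_subset)
  have "inj_on (swap_coord k) (S - T)"
    by (metis inj_on_inverseI swap_coord_swap_coord)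
  then have "card (S - T) \<le> card (T - S)"
    using card_inj_on_le swap_coord_lost_in_gained[OF assms, of k] fin
    unfolding S_def T_def by blast
  moreover have "card S = card (S \<inter> T) + card (S - T)" "card T = card (T \<inter> S) + card (T - S)"
    using fin by (simp_all add: card_Int_Diff)
  ultimately show ?thesis unfolding S_def T_def by (simp add: Int_commute)
qed

theorem mainTheorem7:
  fixes n :: nat and A B :: "(nat \<Rightarrow> bool) set"
  assumes "increasing n A" and "increasing n B"
  shows "P n (box n A B) \<le> P2 n {(\<omega>, \<xi>). occurs_disjointly n A B \<omega> \<xi>}
    \<and> P2 n {(\<omega>, \<xi>). occurs_disjointly n A B \<omega> \<xi>} \<le> P n A * P n B"
proof
  have "card (hybrid_occurrences n A B 0) \<le> card (hybrid_occurrences n A B n)"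
    using lift_Suc_mono_le[of "\<lambda>k. card (hybrid_occurrences n A B k)"]
      card_hybrid_occurrences_Suc[OF assms] by blast
  then have "P2 n (box n A B \<times> cube n) \<le> P2 n {(\<omega>, \<xi>). occurs_disjointly n A B \<omega> \<xi>}"
    unfolding hybrid_occurrences_0 hybrid_occurrences_dim
    by (intro P2_mono_card) (simp add: Int_absorb2 Times_Int_Times)
  then show "P n (box n A B) \<le> P2 n {(\<omega>, \<xi>). occurs_disjointly n A B \<omega> \<xi>}"
    by (simp add: P2_Times P_cube)
next
  have "P2 n {(\<omega>, \<xi>). occurs_disjointly n A B \<omega> \<xi>} \<le> P2 n (A \<times> B)"
    by (rule P2_mono) (auto simp: occurs_disjointly_def witness_def)
  then show "P2 n {(\<omega>, \<xi>). occurs_disjointly n A B \<omega> \<xi>} \<le> P n A * P n B"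
    by (simp add: P2_Times)
qed

end
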